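(* Let $K\in\mathbb R^{m\times L(m+r)}$ and consider the closed loop $v(t+1)=(\Theta+\Pi K)v(t)$, $t\ge L$. Then $v(t)\to0$ as $t\to\infty$ for every realization of $v(L)\sim\mathcal N_\Phi$ if and only if $P^\top(\Theta+\Pi K)P$ is Schur.
   Context: System $\Sigma_s$: $x(t+1)=Ax(t)+Bu(t)$, $y(t)=Cx(t)$, $t\ge0$, $x\in\mathbb R^n,u\in\mathbb R^m,y\in\mathbb R^r$; standing assumptions: $(A,B,C)$ minimal, $A$ Schur. $\mathcal R_L=[A^{L-1}B,\dots,B]$, $\mathcal O_L=[C^\top,\dots,(CA^{L-1})^\top]^\top$, $\mathcal H_L$ the $Lr\times Lm$ block lower-triangular Toeplitz matrix with $(i,j)$ block $H_{i-j}$, $H_0=0$, $H_k=CA^{k-1}B$. Fix $L$ with $\operatorname{rank}\mathcal O_L=n$. $\Gamma=[\mathcal R_L-A^L\mathcal O_L^\dagger\mathcal H_L,\ A^L\mathcal O_L^\dagger]$; $\Theta=\mathrm{diag}(S_m,S_r)+EC\Gamma\in\mathbb R^{L(m+r)\times L(m+r)}$, with $S_k$ the $Lk\times Lk$ block matrix having $I_k$ in blocks $(i,i+1)$, $i<L$, zeros elsewhere, $E$ having $I_r$ in its last $r$ rows, zeros elsewhere; $\Pi\in\mathbb R^{L(m+r)\times m}$ has $I_m$ in rows $(L-1)m+1,\dots,Lm$, zeros elsewhere. (This is the dynamics of the IOH $v(t)=[u(t-L)^\top,\dots,u(t-1)^\top,y(t-L)^\top,\dots,y(t-1)^\top]^\top$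 of $\Sigma_s$ with $y=C\Gamma v$.) $\mathscr P=\mathrm{im}[\Theta^{L(m+r)-1}\Pi,\dots,\Pi]$; $P\in\mathbb R^{L(m+r)\times(Lm+n)}$ satisfies $\mathrm{im}P=\mathscr P$, $P^\top P=I$. $\Phi\ge0$ with $\mathrm{im}\Phi=\mathscr P$; $\mathcal N_\Phi$ is a Gaussian distribution with second moment about zero equal to $\Phi$. *)

theory Defs
  imports "Jordan_Normal_Form.Matrix" "Jordan_Normal_Form.Char_Poly" "Jordan_Normal_Form.DL_Rank"
begin

(* All matrices are Jordan_Normal_Form matrices with explicit dimensions; indices are 0-based. *)

definition mrank :: "real mat \<Rightarrow> nat" where
  "mrank M = vec_space.rank (dim_row M) M"

definition colspace :: "real mat \<Rightarrow> real vec set" where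
  "colspace M = {M *\<^sub>v x | x. x \<in> carrier_vec (dim_col M)}"

definition hcat :: "'a::zero mat \<Rightarrow> 'a mat \<Rightarrow> 'a mat" where
  "hcat X Y = mat (dim_row X) (dim_col X + dim_col Y)
     (\<lambda>(i,j). if j < dim_col X then X $$ (i,j) else Y $$ (i, j - dim_col X))"

definition pinv :: "real mat \<Rightarrow> real mat" where
  "pinv M = (THE X. X \<in> carrier_mat (dim_col M) (dim_row M) \<and> M * X * M = M \<and> X * M * X = X
                  \<and> (M * X)\<^sup>T = M * X \<and> (X * M)\<^sup>T = X * M)"

definition schur :: "real mat \<Rightarrow> bool" where
  "schur M = (\<forall>z. eigenvalue (map_mat complex_of_real M) z \<longrightarrow> cmod z < 1)"

definition psd :: "real mat \<Rightarrow> bool" where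
  "psd M = (M\<^sup>T = M \<and> (\<forall>x \<in> carrier_vec (dim_row M). x \<bullet> (M *\<^sub>v x) \<ge> 0))"

(* R_L = [A^(L-1) B, ..., A B, B] : n x Lm ; block k (0-based) is A^(L-1-k) B *)
definition reach_mat :: "nat \<Rightarrow> real mat \<Rightarrow> real mat \<Rightarrow> real mat" where
  "reach_mat L A B = mat (dim_row A) (L * dim_col B)
     (\<lambda>(i,j). ((A ^\<^sub>m (L - 1 - j div dim_col B)) * B) $$ (i, j mod dim_col B))"

(* O_L = [C; CA; ...; CA^(L-1)] : Lr x n ; block k (0-based) is C A^k *)
definition obs_mat :: "nat \<Rightarrow> real mat \<Rightarrow> real mat \<Rightarrow> real mat" where
  "obs_mat L A C = mat (L * dim_row C) (dim_col A)
     (\<lambda>(i,j). (C * (A ^\<^sub>m (i div dim_row C))) $$ (i mod dim_row C, j))"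

definition markov :: "real mat \<Rightarrow> real mat \<Rightarrow> real mat \<Rightarrow> nat \<Rightarrow> real mat" where
  "markov A B C k = (if k = 0 then 0\<^sub>m (dim_row C) (dim_col B) else C * (A ^\<^sub>m (k - 1)) * B)"

(* H_L : Lr x Lm block lower-triangular Toeplitz, block (a,b) = H_(a-b) (zero if a <= b) *)
definition toep_mat :: "nat \<Rightarrow> real mat \<Rightarrow> real mat \<Rightarrow> real mat \<Rightarrow> real mat" where
  "toep_mat L A B C = mat (L * dim_row C) (L * dim_col B)
     (\<lambda>(i,j). let a = i div dim_row C; b = j div dim_col B in
        if b < a then markov A B C (a - b) $$ (i mod dim_row C, j mod dim_col B) else 0)"

definition minimal :: "real mat \<Rightarrow> real mat \<Rightarrow> real mat \<Rightarrow> bool" where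
  "minimal A B C = (mrank (reach_mat (dim_row A) A B) = dim_row A
                    \<and> mrank (obs_mat (dim_row A) A C) = dim_row A)"

definition Gamma_mat :: "nat \<Rightarrow> real mat \<Rightarrow> real mat \<Rightarrow> real mat \<Rightarrow> real mat" where
  "Gamma_mat L A B C = hcat (reach_mat L A B - (A ^\<^sub>m L) * pinv (obs_mat L A C) * toep_mat L A B C)
                            ((A ^\<^sub>m L) * pinv (obs_mat L A C))"

(* S_k : Lk x Lk, I_k in blocks (i,i+1) *)
definition shift_mat :: "nat \<Rightarrow> nat \<Rightarrow> real mat" where
  "shift_mat L k = mat (L * k) (L * k) (\<lambda>(a,b). if b = a + k then 1 else 0)"

(* E : L(m+r) x r, I_r in last r rows *)
definition E_mat :: "nat \<Rightarrow> nat \<Rightarrow> nat \<Rightarrow> real mat" where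
  "E_mat L m r = mat (L * (m + r)) r (\<lambda>(a,b). if a + r = L * (m + r) + b then 1 else 0)"

(* Pi : L(m+r) x m, I_m in rows (L-1)m+1 .. Lm (1-based) *)
definition Pi_mat :: "nat \<Rightarrow> nat \<Rightarrow> nat \<Rightarrow> real mat" where
  "Pi_mat L m r = mat (L * (m + r)) m (\<lambda>(a,b). if a = (L - 1) * m + b then 1 else 0)"

definition Theta_mat :: "nat \<Rightarrow> real mat \<Rightarrow> real mat \<Rightarrow> real mat \<Rightarrow> real mat" where
  "Theta_mat L A B C =
     four_block_mat (shift_mat L (dim_col B)) (0\<^sub>m (L * dim_col B) (L * dim_row C))
                    (0\<^sub>m (L * dim_row C) (L * dim_col B)) (shift_mat L (dim_row C))
     + E_mat L (dim_col B) (dim_row C) * C * Gamma_mat L A B C"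

(* [Th^(N-1) Pi, ..., Th Pi, Pi], N = dim Th *)
definition ctrb_mat :: "real mat \<Rightarrow> real mat \<Rightarrow> real mat" where
  "ctrb_mat Th Pm = mat (dim_row Th) (dim_row Th * dim_col Pm)
     (\<lambda>(i,j). ((Th ^\<^sub>m (dim_row Th - 1 - j div dim_col Pm)) * Pm) $$ (i, j mod dim_col Pm))"

definition Pspace :: "nat \<Rightarrow> real mat \<Rightarrow> real mat \<Rightarrow> real mat \<Rightarrow> real vec set" where
  "Pspace L A B C = colspace (ctrb_mat (Theta_mat L A B C) (Pi_mat L (dim_col B) (dim_row C)))"

(* Set of possible realizations of a zero-mean Gaussian N_Phi with second moment Phi:
   its support, which is im Phi. *)
definition gaussian_realizations :: "real mat \<Rightarrow> real vec set" where
  "gaussian_realizations Phi = colspace Phi"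

end

theory Submission
  imports Defs "Jordan_Normal_Form.Spectral_Radius"
begin

text \<open>The closed-loop state stays in the reachable space \<open>\<P>\<close> of \<open>(\<Theta>, \<Pi>)\<close>: the
  Krylov spaces \<open>im [\<Theta>\<^sup>k\<^sup>-\<^sup>1\<Pi>, \<dots>, \<Pi>]\<close> increase and, by a dimension count, become stationary
  after \<open>L(m + r)\<close> steps, so \<open>\<P>\<close> contains \<open>im \<Pi>\<close> and is \<open>\<Theta>\<close>-invariant, hence invariant
  under \<open>\<Theta> + \<Pi>K\<close>. As \<open>P\<close> is an orthonormal basis of \<open>\<P>\<close>, the restriction of \<open>\<Theta> + \<Pi>K\<close>
  to \<open>\<P>\<close> is represented by \<open>F = P\<^sup>T(\<Theta> + \<Pi>K)P\<close>, and \<open>v(L + k) = P F\<^sup>k x\<close> when \<open>v(L) = P x\<close>.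
  The realizations of \<open>\<N>\<^sub>\<Phi>\<close> are exactly \<open>im \<Phi> = \<P>\<close>, so every trajectory vanishes iff
  \<open>F\<^sup>k x \<rightarrow> 0\<close> for all \<open>x\<close>, i.e. iff all eigenvalues of \<open>F\<close> lie in the open unit disc:
  one direction scales \<open>F\<close> to spectral radius below \<open>1\<close> and uses bounded powers, the other
  follows an eigenvector.\<close>

lemma pow_mat_Suc_left:
  assumes "A \<in> carrier_mat n n"
  shows "A ^\<^sub>m Suc k = A * A ^\<^sub>m k"
proof (induction k)
  case (Suc k)
  have "A ^\<^sub>m Suc (Suc k) = (A * A ^\<^sub>m k) * A" using Suc by simp
  also have "\<dots> = A * A ^\<^sub>m Suc k"
    using assoc_mult_mat[OF assms pow_carrier_mat[OF assms] assms] by simp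
  finally show ?case .
qed (use assms in simp)

lemma full_column_rank_mult_vec_eq_zero:
  fixes A :: "'a::field mat"
  assumes A: "A \<in> carrier_mat nr nc" and rank: "vec_space.rank nr A = nc"
    and x: "x \<in> carrier_vec nc" and Ax: "A *\<^sub>v x = 0\<^sub>v nr"
  shows "x = 0\<^sub>v nc"
proof (rule ccontr)
  interpret vec_space "TYPE('a)" nr .
  assume x0: "x \<noteq> 0\<^sub>v nc"
  show False
  proof (cases "distinct (cols A)")
    case True
    show False using full_rank_lin_indpt[OF A rank True] lin_depI[OF A x x0 Ax True] by blast
  next
    case False
    obtain S where S: "maximal S (\<lambda>T. T \<subseteq> set (cols A) \<and> lin_indpt T)"
      using maximal_exists[of "\<lambda>T. T \<subseteq> set (cols A) \<and> lin_indpt T" "card (set (cols A))" "{}"]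
      by (meson List.finite_set card_mono empty_iff empty_subsetI finite_lin_indpt2 rev_finite_subset)
    then have "card S \<le> card (set (cols A))" by (simp add: card_mono maximal_def)
    also have "\<dots> < nc"
      using False A by (metis card_distinct card_length carrier_matD(2) cols_length nat_less_le)
    finally show False using rank_card_indpt[OF A S] rank by simp
  qed
qed

definition penrose_conditions :: "'a::comm_ring_1 mat \<Rightarrow> 'a mat \<Rightarrow> bool" where
  "penrose_conditions M X \<longleftrightarrow> X \<in> carrier_mat (dim_col M) (dim_row M) \<and> M * X * M = M
     \<and> X * M * X = X \<and> (M * X)\<^sup>T = M * X \<and> (X * M)\<^sup>T = X * M"

lemma penrose_conditions_unique:
  fixes M :: "'a::comm_ring_1 mat"
  assumes M: "M \<in> carrier_mat nr nc"
    and X: "penrose_conditions M X" and Y: "penrose_conditions M Y"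
  shows "X = Y"
proof -
  from X M have Xc: "X \<in> carrier_mat nc nr" and X1: "M * X * M = M" and X2: "X * M * X = X"
    and X3: "(M * X)\<^sup>T = M * X" and X4: "(X * M)\<^sup>T = X * M"
    unfolding penrose_conditions_def by auto
  from Y M have Yc: "Y \<in> carrier_mat nc nr" and Y1: "M * Y * M = M" and Y2: "Y * M * Y = Y"
    and Y3: "(M * Y)\<^sup>T = M * Y" and Y4: "(Y * M)\<^sup>T = Y * M"
    unfolding penrose_conditions_def by auto
  note c = M Xc Yc
  have MX: "M * X = M * Y"
  proof -
    have "M * Y = (M * X * M) * Y" using X1 by simp
    also have "\<dots> = (M * X) * (M * Y)" using assoc_mult_mat[of "M * X" nr nr M nc Y nr] c by auto
    also have "\<dots> = (M * X)\<^sup>T * (M * Y)\<^sup>T" using X3 Y3 by simp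
    also have "\<dots> = (M * Y * (M * X))\<^sup>T" using c by (subst transpose_mult[of _ nr nr]) auto
    also have "M * Y * (M * X) = (M * Y * M) * X"
      using assoc_mult_mat[of "M * Y" nr nr M nc X nr] c by auto
    finally show ?thesis using X3 Y1 by simp
  qed
  have XM: "X * M = Y * M"
  proof -
    have "X * M = X * (M * Y * M)" using Y1 by simp
    also have "\<dots> = (X * M) * (Y * M)"
      using assoc_mult_mat[of X nc nr M nc "Y * M" nc] assoc_mult_mat[of M nr nc Y nr M nc] c by auto
    also have "\<dots> = (X * M)\<^sup>T * (Y * M)\<^sup>T" using X4 Y4 by simp
    also have "\<dots> = (Y * M * (X * M))\<^sup>T" using c by (subst transpose_mult[of _ nc nc]) auto
    also have "Y * M * (X * M) = Y * (M * X * M)"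
      using assoc_mult_mat[of Y nc nr M nc "X * M" nc] assoc_mult_mat[of M nr nc X nr M nc] c by auto
    finally show ?thesis using X1 Y4 by simp
  qed
  have "X = X * (M * X)" using X2 c by (simp add: assoc_mult_mat[of _ nc nr])
  also have "\<dots> = (X * M) * Y" unfolding MX using assoc_mult_mat[of X nc nr M nc Y nr] c by simp
  also have "\<dots> = (Y * M) * Y" unfolding XM ..
  also have "\<dots> = Y" by (rule Y2)
  finally show ?thesis .
qed

lemma gram_mat_det_nonzero:
  fixes M :: "real mat"
  assumes M: "M \<in> carrier_mat nr nc"
    and inj: "\<And>x. x \<in> carrier_vec nc \<Longrightarrow> M *\<^sub>v x = 0\<^sub>v nr \<Longrightarrow> x = 0\<^sub>v nc"
  shows "det (M\<^sup>T * M) \<noteq> 0"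
proof
  assume "det (M\<^sup>T * M) = 0"
  then obtain v where v: "v \<in> carrier_vec nc" "v \<noteq> 0\<^sub>v nc" "(M\<^sup>T * M) *\<^sub>v v = 0\<^sub>v nc"
    using det_0_iff_vec_prod_zero_field[of "M\<^sup>T * M" nc] M by auto
  have "(M *\<^sub>v v) \<bullet> (M *\<^sub>v v) = ((M\<^sup>T * M) *\<^sub>v v) \<bullet> v"
    using transpose_vec_mult_scalar[OF M v(1), of "M *\<^sub>v v"] M v(1) by auto
  also have "\<dots> = 0" using v by simp
  finally have "M *\<^sub>v v = 0\<^sub>v nr"
    using conjugate_square_eq_0_vec[of "M *\<^sub>v v" nr] M v(1) by simp
  with inj v show False by blast
qed

text \<open>For an injective \<open>M\<close> the pseudoinverse is the left inverse \<open>(M\<^sup>T M)\<^sup>-\<^sup>1 M\<^sup>T\<close>.\<close>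

lemma penrose_conditions_left_inverse:
  fixes M :: "real mat"
  assumes M: "M \<in> carrier_mat nr nc"
    and inj: "\<And>x. x \<in> carrier_vec nc \<Longrightarrow> M *\<^sub>v x = 0\<^sub>v nr \<Longrightarrow> x = 0\<^sub>v nc"
  obtains X where "penrose_conditions M X"
proof -
  define G where "G = M\<^sup>T * M"
  have G: "G \<in> carrier_mat nc nc" using M unfolding G_def by auto
  from det_non_zero_imp_unit[OF G gram_mat_det_nonzero[OF M inj, folded G_def], of "()"]
  obtain Q where Q: "Q \<in> carrier_mat nc nc" and QG: "Q * G = 1\<^sub>m nc" and GQ: "G * Q = 1\<^sub>m nc"
    unfolding Units_def ring_mat_def by auto
  have GT: "G\<^sup>T = G" unfolding G_def using M by (simp add: transpose_mult[of _ nc nr])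
  have QT: "Q\<^sup>T = Q"
  proof -
    have QTG: "Q\<^sup>T * G = 1\<^sub>m nc" using transpose_mult[OF G Q] GQ GT by simp
    have "Q\<^sup>T = Q\<^sup>T * (G * Q)" using GQ Q by simp
    also have "\<dots> = (Q\<^sup>T * G) * Q" using Q G by (simp add: assoc_mult_mat[of _ nc nc])
    finally show ?thesis using QTG Q by simp
  qed
  define X where "X = Q * M\<^sup>T"
  have Xc: "X \<in> carrier_mat nc nr" using Q M unfolding X_def by auto
  have XM: "X * M = 1\<^sub>m nc"
    unfolding X_def using Q M QG G_def by (simp add: assoc_mult_mat[of _ nc nc])
  have MXT: "(M * X)\<^sup>T = M * X"
  proof -
    have "(M * X)\<^sup>T = X\<^sup>T * M\<^sup>T" using transpose_mult[OF M Xc] .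
    also have "X\<^sup>T = M * Q"
      unfolding X_def using transpose_mult[of Q nc nc "M\<^sup>T" nr] Q M QT by simp
    also have "M * Q * M\<^sup>T = M * X" unfolding X_def using Q M by (simp add: assoc_mult_mat[of _ nr nc])
    finally show ?thesis .
  qed
  have "penrose_conditions M X"
    unfolding penrose_conditions_def using Xc M XM MXT
    by (auto simp: assoc_mult_mat[of M nr nc X nr M nc])
  then show thesis by (rule that)
qed

lemma pinv_carrier_mat:
  fixes M :: "real mat"
  assumes M: "M \<in> carrier_mat nr nc" and rank: "vec_space.rank nr M = nc"
  shows "pinv M \<in> carrier_mat nc nr"
proof -
  obtain X where X: "penrose_conditions M X"
    using penrose_conditions_left_inverse[OF M full_column_rank_mult_vec_eq_zero[OF M rank]] .
  have "penrose_conditions M (pinv M)"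
    unfolding pinv_def penrose_conditions_def[symmetric]
    using theI[of "penrose_conditions M" X] X penrose_conditions_unique[OF M] by blast
  then show ?thesis using M unfolding penrose_conditions_def by auto
qed

lemma mult_mat_vec_mem_colspace:
  "M \<in> carrier_mat nr nc \<Longrightarrow> x \<in> carrier_vec nc \<Longrightarrow> M *\<^sub>v x \<in> colspace M"
  unfolding colspace_def by auto

lemma colspace_carrier: "M \<in> carrier_mat nr nc \<Longrightarrow> colspace M \<subseteq> carrier_vec nr"
  unfolding colspace_def by auto

lemma zero_mem_colspace:
  assumes M: "M \<in> carrier_mat nr nc"
  shows "0\<^sub>v nr \<in> colspace M"
proof -
  have "M *\<^sub>v 0\<^sub>v nc = 0\<^sub>v nr" using M by (intro eq_vecI) (auto simp: scalar_prod_def)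
  then show ?thesis using mult_mat_vec_mem_colspace[OF M, of "0\<^sub>v nc"] by simp
qed

lemma add_mem_colspace:
  assumes M: "M \<in> carrier_mat nr nc" and "u \<in> colspace M" "w \<in> colspace M"
  shows "u + w \<in> colspace M"
proof -
  obtain x y where "x \<in> carrier_vec nc" "u = M *\<^sub>v x" "y \<in> carrier_vec nc" "w = M *\<^sub>v y"
    using assms unfolding colspace_def by auto
  then show ?thesis
    using mult_mat_vec_mem_colspace[OF M, of "x + y"] M by (simp add: mult_add_distrib_mat_vec)
qed

lemma smult_mem_colspace:
  assumes M: "M \<in> carrier_mat nr nc" and "u \<in> colspace M"
  shows "c \<cdot>\<^sub>v u \<in> colspace M"
proof -
  obtain x where "x \<in> carrier_vec nc" "u = M *\<^sub>v x"
    using assms unfolding colspace_def by auto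
  then show ?thesis
    using mult_mat_vec_mem_colspace[OF M, of "c \<cdot>\<^sub>v x"] M by (simp add: mult_mat_vec)
qed

lemma hcat_carrier:
  "X \<in> carrier_mat nr a \<Longrightarrow> Y \<in> carrier_mat nr b \<Longrightarrow> hcat X Y \<in> carrier_mat nr (a + b)"
  unfolding hcat_def by auto

lemma hcat_mult_append_vec:
  assumes X: "X \<in> carrier_mat nr a" and Y: "Y \<in> carrier_mat nr b"
    and x: "x \<in> carrier_vec a" and y: "y \<in> carrier_vec b"
  shows "hcat X Y *\<^sub>v (x @\<^sub>v y) = X *\<^sub>v x + Y *\<^sub>v y"
proof (rule eq_vecI)
  fix i assume "i < dim_vec (X *\<^sub>v x + Y *\<^sub>v y)"
  then have i: "i < nr" using Y by simp
  have "row (hcat X Y) i = row X i @\<^sub>v row Y i"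
    using i X Y unfolding hcat_def by (intro eq_vecI) auto
  then show "(hcat X Y *\<^sub>v (x @\<^sub>v y)) $ i = (X *\<^sub>v x + Y *\<^sub>v y) $ i"
    using i X Y x y hcat_carrier[OF X Y] by (simp add: scalar_prod_append[of _ a _ b])
qed (use X Y hcat_carrier[OF X Y] in simp)

lemma colspace_hcat:
  assumes X: "X \<in> carrier_mat nr a" and Y: "Y \<in> carrier_mat nr b"
  shows "colspace (hcat X Y) = {X *\<^sub>v x + Y *\<^sub>v y | x y. x \<in> carrier_vec a \<and> y \<in> carrier_vec b}"
proof (intro equalityI subsetI)
  fix w assume "w \<in> colspace (hcat X Y)"
  then obtain z where z: "z \<in> carrier_vec (a + b)" and w: "w = hcat X Y *\<^sub>v z"
    unfolding colspace_def using hcat_carrier[OF X Y] by auto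
  have "w = hcat X Y *\<^sub>v (vec_first z a @\<^sub>v vec_last z b)"
    using vec_first_last_append[OF z] w by simp
  also have "\<dots> = X *\<^sub>v vec_first z a + Y *\<^sub>v vec_last z b"
    by (rule hcat_mult_append_vec[OF X Y]) simp_all
  finally show "w \<in> {X *\<^sub>v x + Y *\<^sub>v y | x y. x \<in> carrier_vec a \<and> y \<in> carrier_vec b}"
    using vec_first_carrier vec_last_carrier by blast
next
  fix w assume "w \<in> {X *\<^sub>v x + Y *\<^sub>v y | x y. x \<in> carrier_vec a \<and> y \<in> carrier_vec b}"
  then obtain x y where "x \<in> carrier_vec a" "y \<in> carrier_vec b" "w = hcat X Y *\<^sub>v (x @\<^sub>v y)"
    using hcat_mult_append_vec[OF X Y] by auto
  then show "w \<in> colspace (hcat X Y)"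
    using mult_mat_vec_mem_colspace[OF hcat_carrier[OF X Y]] by simp
qed

lemma wide_mat_kernel_nonzero:
  fixes A :: "'a::field mat"
  assumes A: "A \<in> carrier_mat n (Suc n)"
  obtains v where "v \<in> carrier_vec (Suc n)" "v \<noteq> 0\<^sub>v (Suc n)" "A *\<^sub>v v = 0\<^sub>v n"
proof -
  define X where "X = mat\<^sub>r (Suc n) (Suc n) (\<lambda>i. if i = n then 0\<^sub>v (Suc n) else row A i)"
  have X: "X \<in> carrier_mat (Suc n) (Suc n)" unfolding X_def by simp
  have "det X = 0" unfolding X_def by (rule det_row_0) (use A in \<open>auto intro: carrier_vecI\<close>)
  then obtain v where v: "v \<in> carrier_vec (Suc n)" "v \<noteq> 0\<^sub>v (Suc n)" "X *\<^sub>v v = 0\<^sub>v (Suc n)"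
    using det_0_iff_vec_prod_zero_field[OF X] by auto
  have "A *\<^sub>v v = 0\<^sub>v n"
  proof (rule eq_vecI)
    fix i assume "i < dim_vec (0\<^sub>v n :: 'a vec)"
    then have i: "i < n" by simp
    have "row X i = row A i" unfolding X_def using i A by simp
    then have "(A *\<^sub>v v) $ i = (X *\<^sub>v v) $ i" using i A X by simp
    then show "(A *\<^sub>v v) $ i = 0\<^sub>v n $ i" using v(3) i by simp
  qed (use A in simp)
  with v that show thesis by blast
qed

lemma last_nonzero_entry:
  assumes v: "v \<in> carrier_vec (Suc N)" "v \<noteq> 0\<^sub>v (Suc N)"
  obtains J where "J \<le> N" "v $ J \<noteq> 0" "\<And>j. J < j \<Longrightarrow> j \<le> N \<Longrightarrow> v $ j = 0"
proof -
  have "\<exists>j. j \<le> N \<and> v $ j \<noteq> 0"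
  proof (rule ccontr)
    assume "\<not> ?thesis"
    then have "v = 0\<^sub>v (Suc N)" using v(1) by (intro eq_vecI) auto
    with v(2) show False by contradiction
  qed
  then obtain j0 where j0: "j0 \<le> N" "v $ j0 \<noteq> 0" by blast
  define J where "J = (GREATEST j. j \<le> N \<and> v $ j \<noteq> 0)"
  have "J \<le> N \<and> v $ J \<noteq> 0"
    unfolding J_def by (rule GreatestI_nat[of _ j0 N]) (use j0 in auto)
  moreover have "v $ j = 0" if "J < j" "j \<le> N" for j
  proof (rule ccontr)
    assume "v $ j \<noteq> 0"
    have "j \<le> J"
      unfolding J_def by (rule Greatest_le_nat[of _ j N]) (use \<open>v $ j \<noteq> 0\<close> that in auto)
    with that(1) show False by simp
  qed
  ultimately show thesis using that by blast
qed

lemma lincomb_mem_colspace: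
  fixes M :: "real mat" and s :: nat
  assumes M: "M \<in> carrier_mat nr nc" and w: "\<And>j. j < s \<Longrightarrow> w j \<in> colspace M"
  shows "vec nr (\<lambda>i. \<Sum>j<s. w j $ i * a j) \<in> colspace M"
proof -
  have "vec nr (\<lambda>i. \<Sum>j<t. w j $ i * a j) \<in> colspace M" if "t \<le> s" for t
    using that
  proof (induction t)
    case 0
    have "vec nr (\<lambda>i. \<Sum>j<0. w j $ i * a j) = 0\<^sub>v nr" by (intro eq_vecI) auto
    then show ?case using zero_mem_colspace[OF M] by simp
  next
    case (Suc t)
    have wt: "w t \<in> colspace M" using w Suc.prems by simp
    then have "w t \<in> carrier_vec nr" using colspace_carrier[OF M] by blast
    then have "vec nr (\<lambda>i. \<Sum>j<Suc t. w j $ i * a j) = vec nr (\<lambda>i. \<Sum>j<t. w j $ i * a j) + a t \<cdot>\<^sub>v w t"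
      by (intro eq_vecI) auto
    moreover have "vec nr (\<lambda>i. \<Sum>j<t. w j $ i * a j) \<in> colspace M" using Suc by simp
    ultimately show ?case by (simp add: add_mem_colspace[OF M] smult_mem_colspace[OF M] wt)
  qed
  then show ?thesis by simp
qed

text \<open>Vectors \<open>w\<^sub>k \<in> W\<^sub>k\<^sub>+\<^sub>1 - W\<^sub>k\<close> for \<open>k \<le> N\<close> would be \<open>N + 1\<close> linearly independent
  vectors in an \<open>N\<close>-dimensional space: in a vanishing combination, the last vector with a nonzero
  coefficient would lie in the span of the earlier ones.\<close>

lemma colspace_chain_stalls:
  fixes G :: "nat \<Rightarrow> real mat"
  assumes G: "\<And>k. G k \<in> carrier_mat N (c k)"
    and mono: "\<And>k. colspace (G k) \<subseteq> colspace (G (Suc k))"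
  shows "\<exists>k \<le> N. colspace (G (Suc k)) = colspace (G k)"
proof (rule ccontr)
  let ?W = "\<lambda>k. colspace (G k)"
  assume "\<not> ?thesis"
  then have "\<forall>k \<in> {..N}. \<exists>w. w \<in> ?W (Suc k) \<and> w \<notin> ?W k" using mono by blast
  then obtain w where w: "\<And>k. k \<le> N \<Longrightarrow> w k \<in> ?W (Suc k) \<and> w k \<notin> ?W k"
    using bchoice[of "{..N}"] by (metis atMost_iff)
  define X where "X = mat N (Suc N) (\<lambda>(i, j). w j $ i)"
  have "X \<in> carrier_mat N (Suc N)" unfolding X_def by simp
  then obtain v where v: "v \<in> carrier_vec (Suc N)" "v \<noteq> 0\<^sub>v (Suc N)" and Xv: "X *\<^sub>v v = 0\<^sub>v N"
    by (rule wide_mat_kernel_nonzero)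
  obtain J where J: "J \<le> N" "v $ J \<noteq> 0" and above_J: "\<And>j. J < j \<Longrightarrow> j \<le> N \<Longrightarrow> v $ j = 0"
    using last_nonzero_entry[OF v] by blast
  have earlier: "w j \<in> ?W J" if "j < J" for j
    using w[of j] lift_Suc_mono_le[of ?W, OF mono, of "Suc j" J] that J(1) by auto
  have "w J = (- 1 / v $ J) \<cdot>\<^sub>v vec N (\<lambda>i. \<Sum>j<J. w j $ i * v $ j)"
  proof (rule eq_vecI)
    have "w J \<in> carrier_vec N" using w[OF J(1)] colspace_carrier[OF G] by blast
    then show "dim_vec (w J) = dim_vec ((- 1 / v $ J) \<cdot>\<^sub>v vec N (\<lambda>i. \<Sum>j<J. w j $ i * v $ j))" by simp
    fix i assume "i < dim_vec ((- 1 / v $ J) \<cdot>\<^sub>v vec N (\<lambda>i. \<Sum>j<J. w j $ i * v $ j))"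
    then have i: "i < N" by simp
    have "(\<Sum>j<Suc J. w j $ i * v $ j) = (\<Sum>j<Suc N. w j $ i * v $ j)"
      by (rule sum.mono_neutral_left) (use J above_J in auto)
    also have "\<dots> = (X *\<^sub>v v) $ i"
      using i v(1) unfolding X_def by (auto simp: scalar_prod_def lessThan_atLeast0 intro!: sum.cong)
    also have "\<dots> = 0" using Xv i by simp
    finally have "(\<Sum>j<J. w j $ i * v $ j) + w J $ i * v $ J = 0" by simp
    then show "w J $ i = ((- 1 / v $ J) \<cdot>\<^sub>v vec N (\<lambda>i. \<Sum>j<J. w j $ i * v $ j)) $ i"
      using i J by (auto simp: field_simps)
  qed
  then have "w J \<in> ?W J"
    using lincomb_mem_colspace[OF G earlier, where a = "\<lambda>j. v $ j"] smult_mem_colspace[OF G] by simp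
  with w[OF J(1)] show False by blast
qed

lemma colspace_iteration_stabilizes:
  fixes G :: "nat \<Rightarrow> real mat"
  assumes G: "\<And>k. G k \<in> carrier_mat N (c k)"
    and mono: "\<And>k. colspace (G k) \<subseteq> colspace (G (Suc k))"
    and iter: "\<And>k. colspace (G (Suc k)) = F (colspace (G k))"
  shows "colspace (G (Suc N)) = colspace (G N)"
proof -
  obtain k where k: "k \<le> N" "colspace (G (Suc k)) = colspace (G k)"
    using colspace_chain_stalls[where G = G, OF G mono] by blast
  have "colspace (G (Suc j)) = colspace (G j)" if "k \<le> j" for j
    using that
  proof (induction j rule: dec_induct)
    case (step j)
    have "colspace (G (Suc (Suc j))) = F (colspace (G (Suc j)))" by (rule iter)
    also have "\<dots> = colspace (G (Suc j))" using step.IH iter[of j] by simp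
    finally show ?case .
  qed (rule k(2))
  then show ?thesis using k(1) .
qed

definition krylov_mat :: "'a::semiring_1 mat \<Rightarrow> 'a mat \<Rightarrow> nat \<Rightarrow> 'a mat" where
  "krylov_mat A B k = mat (dim_row A) (k * dim_col B)
     (\<lambda>(i, j). (A ^\<^sub>m (k - 1 - j div dim_col B) * B) $$ (i, j mod dim_col B))"

lemma ctrb_mat_eq_krylov_mat: "ctrb_mat A B = krylov_mat A B (dim_row A)"
  unfolding ctrb_mat_def krylov_mat_def ..

lemma krylov_mat_carrier: "A \<in> carrier_mat n n \<Longrightarrow> B \<in> carrier_mat n m \<Longrightarrow> krylov_mat A B k \<in> carrier_mat n (k * m)"
  unfolding krylov_mat_def by simp

lemma krylov_mat_Suc:
  assumes A: "A \<in> carrier_mat n n" and B: "B \<in> carrier_mat n m"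
  shows "krylov_mat A B (Suc k) = hcat (A * krylov_mat A B k) B"
proof (rule eq_matI)
  fix i j assume "i < dim_row (hcat (A * krylov_mat A B k) B)" "j < dim_col (hcat (A * krylov_mat A B k) B)"
  then have i: "i < n" and j: "j < k * m + m" using A B by (auto simp: hcat_def krylov_mat_def)
  then have m: "0 < m" by (cases m) auto
  show "krylov_mat A B (Suc k) $$ (i, j) = hcat (A * krylov_mat A B k) B $$ (i, j)"
  proof (cases "j < k * m")
    case True
    define q where "q = j div m"
    have q: "q < k" using True m unfolding q_def by (simp add: less_mult_imp_div_less)
    have c: "j mod m < m" using m by simp
    have "krylov_mat A B (Suc k) $$ (i, j) = (A ^\<^sub>m Suc (k - 1 - q) * B) $$ (i, j mod m)"
      using i j q A B unfolding krylov_mat_def q_def by (simp add: Suc_diff_Suc)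
    also have "A ^\<^sub>m Suc (k - 1 - q) * B = A * (A ^\<^sub>m (k - 1 - q) * B)"
      by (subst pow_mat_Suc_left[OF A]) (rule assoc_mult_mat[OF A pow_carrier_mat[OF A] B])
    also have "\<dots> $$ (i, j mod m) = row A i \<bullet> col (krylov_mat A B k) j"
      using i c True A B unfolding krylov_mat_def q_def by (auto intro!: arg_cong[of _ _ "(\<bullet>) (row A i)"])
    also have "\<dots> = hcat (A * krylov_mat A B k) B $$ (i, j)"
      using i j True A B unfolding hcat_def by (simp add: krylov_mat_def)
    finally show ?thesis .
  next
    case False
    then have jdiv: "j div m = k"
      using j by (intro div_nat_eqI) (auto simp: mult.commute)
    then have "j mod m = j - k * m" using minus_div_mult_eq_mod[of j m] by simp
    moreover have "j - k * m < m" using j m by arith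
    ultimately show ?thesis
      using i j False A B col_carrier_vec[OF \<open>j - k * m < m\<close> B] jdiv
      unfolding krylov_mat_def hcat_def by simp
  qed
qed (use A B in \<open>auto simp: hcat_def krylov_mat_def\<close>)

lemma colspace_krylov_mat_Suc:
  assumes A: "A \<in> carrier_mat n n" and B: "B \<in> carrier_mat n m"
  shows "colspace (krylov_mat A B (Suc k))
    = {A *\<^sub>v w + B *\<^sub>v x | w x. w \<in> colspace (krylov_mat A B k) \<and> x \<in> carrier_vec m}"
proof -
  have K: "krylov_mat A B k \<in> carrier_mat n (k * m)" by (rule krylov_mat_carrier[OF A B])
  have "colspace (krylov_mat A B (Suc k))
      = {(A * krylov_mat A B k) *\<^sub>v y + B *\<^sub>v x | y x. y \<in> carrier_vec (k * m) \<and> x \<in> carrier_vec m}"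
    unfolding krylov_mat_Suc[OF A B] colspace_hcat[OF mult_carrier_mat[OF A K] B] ..
  also have "\<dots> = {A *\<^sub>v w + B *\<^sub>v x | w x. w \<in> colspace (krylov_mat A B k) \<and> x \<in> carrier_vec m}"
  proof (intro equalityI subsetI)
    fix z assume "z \<in> {(A * krylov_mat A B k) *\<^sub>v y + B *\<^sub>v x | y x. y \<in> carrier_vec (k * m) \<and> x \<in> carrier_vec m}"
    then obtain y x where y: "y \<in> carrier_vec (k * m)" and "x \<in> carrier_vec m"
      and "z = A *\<^sub>v (krylov_mat A B k *\<^sub>v y) + B *\<^sub>v x"
      using A K by auto
    moreover have "krylov_mat A B k *\<^sub>v y \<in> colspace (krylov_mat A B k)"
      by (rule mult_mat_vec_mem_colspace[OF K y])
    ultimately show "z \<in> {A *\<^sub>v w + B *\<^sub>v x | w x. w \<in> colspace (krylov_mat A B k) \<and> x \<in> carrier_vec m}"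
      by blast
  next
    fix z assume "z \<in> {A *\<^sub>v w + B *\<^sub>v x | w x. w \<in> colspace (krylov_mat A B k) \<and> x \<in> carrier_vec m}"
    then obtain y x where "y \<in> carrier_vec (k * m)" and "x \<in> carrier_vec m"
      and "z = (A * krylov_mat A B k) *\<^sub>v y + B *\<^sub>v x"
      unfolding colspace_def using A K by auto
    then show "z \<in> {(A * krylov_mat A B k) *\<^sub>v y + B *\<^sub>v x | y x. y \<in> carrier_vec (k * m) \<and> x \<in> carrier_vec m}"
      by blast
  qed
  finally show ?thesis .
qed

lemma colspace_krylov_mat_mono:
  assumes A: "A \<in> carrier_mat n n" and B: "B \<in> carrier_mat n m"
  shows "colspace (krylov_mat A B k) \<subseteq> colspace (krylov_mat A B (Suc k))"
proof (induction k)
  case 0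
  have "colspace (krylov_mat A B 0) \<subseteq> {0\<^sub>v n}"
    using krylov_mat_carrier[OF A B, of 0] unfolding colspace_def
    by (auto intro!: eq_vecI simp: scalar_prod_def)
  then show ?case using zero_mem_colspace[OF krylov_mat_carrier[OF A B]] by blast
next
  case (Suc k)
  then show ?case unfolding colspace_krylov_mat_Suc[OF A B, of "Suc k"] colspace_krylov_mat_Suc[OF A B, of k]
    by blast
qed

text \<open>From step \<open>n\<close> on the Krylov spaces are stationary, so the reachable space \<open>W\<close>
  satisfies \<open>W = A W + im B\<close>.\<close>

lemma colspace_ctrb_mat_closed_loop_invariant:
  assumes A: "A \<in> carrier_mat n n" and B: "B \<in> carrier_mat n m" and K: "K \<in> carrier_mat m n"
    and w: "w \<in> colspace (ctrb_mat A B)"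
  shows "(A + B * K) *\<^sub>v w \<in> colspace (ctrb_mat A B)"
proof -
  let ?W = "\<lambda>k. colspace (krylov_mat A B k)"
  have stable: "?W (Suc n) = ?W n"
    by (rule colspace_iteration_stabilizes[where G = "krylov_mat A B"])
      (use krylov_mat_carrier[OF A B] colspace_krylov_mat_mono[OF A B] colspace_krylov_mat_Suc[OF A B] in auto)
  have ctrb: "colspace (ctrb_mat A B) = ?W n" using A by (simp add: ctrb_mat_eq_krylov_mat)
  have wc: "w \<in> carrier_vec n" using w colspace_carrier[OF krylov_mat_carrier[OF A B]] ctrb by blast
  have "(A + B * K) *\<^sub>v w = A *\<^sub>v w + B *\<^sub>v (K *\<^sub>v w)"
    using A B K wc by (simp add: add_mult_distrib_mat_vec[of _ n n])
  also have "\<dots> \<in> ?W (Suc n)"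
    unfolding colspace_krylov_mat_Suc[OF A B] using w ctrb mult_mat_vec_carrier[OF K wc] by blast
  finally show ?thesis using stable ctrb by simp
qed

lemma col_mem_colspace:
  assumes P: "P \<in> carrier_mat nr nc" and j: "j < nc"
  shows "col P j \<in> colspace P"
proof -
  have "P *\<^sub>v unit_vec nc j = col P j" using P j by (intro eq_vecI) auto
  then show ?thesis using mult_mat_vec_mem_colspace[OF P unit_vec_carrier[of nc j]] by simp
qed

lemma invariant_colspace_mult_eq:
  fixes M P :: "real mat"
  assumes M: "M \<in> carrier_mat N N" and P: "P \<in> carrier_mat N d" and PP: "P\<^sup>T * P = 1\<^sub>m d"
    and inv: "\<And>w. w \<in> colspace P \<Longrightarrow> M *\<^sub>v w \<in> colspace P"
  shows "M * P = P * (P\<^sup>T * M * P)"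
proof (rule mat_col_eqI)
  fix j assume "j < dim_col (P * (P\<^sup>T * M * P))"
  then have j: "j < d" using P by simp
  obtain z where z: "z \<in> carrier_vec d" and Mz: "M *\<^sub>v col P j = P *\<^sub>v z"
    using inv[OF col_mem_colspace[OF P j]] P unfolding colspace_def by auto
  have PTM: "P\<^sup>T * M \<in> carrier_mat d N" using M P by simp
  have "col (P * (P\<^sup>T * M * P)) j = P *\<^sub>v ((P\<^sup>T * M) *\<^sub>v col P j)"
    using col_mult2[OF P mult_carrier_mat[OF PTM P] j] col_mult2[OF PTM P j] by simp
  also have "\<dots> = P *\<^sub>v (P\<^sup>T *\<^sub>v (M *\<^sub>v col P j))"
    using assoc_mult_mat_vec[of "P\<^sup>T" d N M N "col P j"] M P col_carrier_vec[OF j P] by simp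
  also have "\<dots> = P *\<^sub>v ((P\<^sup>T * P) *\<^sub>v z)" unfolding Mz using P z by simp
  also have "\<dots> = M *\<^sub>v col P j" unfolding PP using z Mz by simp
  also have "\<dots> = col (M * P) j" using col_mult2[OF M P j] by simp
  finally show "col (M * P) j = col (P * (P\<^sup>T * M * P)) j" ..
qed (use M P in auto)

lemma pow_mat_intertwine:
  assumes M: "M \<in> carrier_mat N N" and P: "P \<in> carrier_mat N d" and F: "F \<in> carrier_mat d d"
    and MP: "M * P = P * F"
  shows "M ^\<^sub>m k * P = P * F ^\<^sub>m k"
proof (induction k)
  case (Suc k)
  have "M ^\<^sub>m Suc k * P = M ^\<^sub>m k * (M * P)"
    using assoc_mult_mat[OF pow_carrier_mat[OF M] M P] by simp
  also have "\<dots> = (M ^\<^sub>m k * P) * F"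
    unfolding MP using assoc_mult_mat[OF pow_carrier_mat[OF M] P F] by simp
  also have "\<dots> = P * F ^\<^sub>m Suc k"
    unfolding Suc using assoc_mult_mat[OF P pow_carrier_mat[OF F] F] by simp
  finally show ?case .
qed (use M P F in simp)

lemma mult_mat_vec_tendsto_zero:
  fixes Q :: "real mat" and y :: "nat \<Rightarrow> real vec"
  assumes Q: "Q \<in> carrier_mat nr nc" and y: "\<And>k. y k \<in> carrier_vec nc"
    and lim: "\<And>j. j < nc \<Longrightarrow> (\<lambda>k. y k $ j) \<longlonglongrightarrow> 0" and i: "i < nr"
  shows "(\<lambda>k. (Q *\<^sub>v y k) $ i) \<longlonglongrightarrow> 0"
proof -
  have entry: "(Q *\<^sub>v y k) $ i = (\<Sum>j<nc. Q $$ (i, j) * y k $ j)" for k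
    using Q y[of k] i by (auto simp: scalar_prod_def lessThan_atLeast0)
  show ?thesis
    unfolding entry by (rule tendsto_null_sum) (auto intro!: tendsto_mult_right_zero lim)
qed

lemma invariant_colspace_pow_mult_vec:
  fixes M P :: "real mat"
  assumes M: "M \<in> carrier_mat N N" and P: "P \<in> carrier_mat N d" and PP: "P\<^sup>T * P = 1\<^sub>m d"
    and inv: "\<And>w. w \<in> colspace P \<Longrightarrow> M *\<^sub>v w \<in> colspace P"
    and y: "y \<in> carrier_vec d"
  shows "M ^\<^sub>m k *\<^sub>v (P *\<^sub>v y) = P *\<^sub>v ((P\<^sup>T * M * P) ^\<^sub>m k *\<^sub>v y)"
proof -
  have F: "P\<^sup>T * M * P \<in> carrier_mat d d" using M P by simp
  have "M ^\<^sub>m k *\<^sub>v (P *\<^sub>v y) = (M ^\<^sub>m k * P) *\<^sub>v y"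
    using assoc_mult_mat_vec[OF pow_carrier_mat[OF M] P y] by simp
  also have "M ^\<^sub>m k * P = P * (P\<^sup>T * M * P) ^\<^sub>m k"
    by (rule pow_mat_intertwine[OF M P F invariant_colspace_mult_eq[OF M P PP inv]])
  also have "(P * (P\<^sup>T * M * P) ^\<^sub>m k) *\<^sub>v y = P *\<^sub>v ((P\<^sup>T * M * P) ^\<^sub>m k *\<^sub>v y)"
    using assoc_mult_mat_vec[OF P pow_carrier_mat[OF F] y] .
  finally show ?thesis .
qed

lemma invariant_colspace_pow_tendsto_zero_iff:
  fixes M P :: "real mat"
  assumes M: "M \<in> carrier_mat N N" and P: "P \<in> carrier_mat N d" and PP: "P\<^sup>T * P = 1\<^sub>m d"
    and inv: "\<And>w. w \<in> colspace P \<Longrightarrow> M *\<^sub>v w \<in> colspace P"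
  shows "(\<forall>x \<in> colspace P. \<forall>i < N. (\<lambda>k. (M ^\<^sub>m k *\<^sub>v x) $ i) \<longlonglongrightarrow> 0)
    \<longleftrightarrow> (\<forall>y \<in> carrier_vec d. \<forall>i < d. (\<lambda>k. ((P\<^sup>T * M * P) ^\<^sub>m k *\<^sub>v y) $ i) \<longlonglongrightarrow> 0)"
proof -
  define F where "F = P\<^sup>T * M * P"
  have Fk: "F ^\<^sub>m k *\<^sub>v y \<in> carrier_vec d" for k y using M P unfolding F_def by (intro carrier_vecI) simp
  have pow: "M ^\<^sub>m k *\<^sub>v (P *\<^sub>v y) = P *\<^sub>v (F ^\<^sub>m k *\<^sub>v y)" if "y \<in> carrier_vec d" for k y
    using invariant_colspace_pow_mult_vec[OF M P PP inv that] unfolding F_def .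
  have recover: "P\<^sup>T *\<^sub>v (P *\<^sub>v z) = z" if "z \<in> carrier_vec d" for z
    using assoc_mult_mat_vec[of "P\<^sup>T" d N P d z] P that PP by simp
  show ?thesis
    unfolding F_def[symmetric]
  proof (intro iffI ballI allI impI)
    fix y :: "real vec" and i assume lim: "\<forall>x \<in> colspace P. \<forall>i < N. (\<lambda>k. (M ^\<^sub>m k *\<^sub>v x) $ i) \<longlonglongrightarrow> 0"
      and y: "y \<in> carrier_vec d" and i: "i < d"
    have "(\<lambda>k. (P\<^sup>T *\<^sub>v (M ^\<^sub>m k *\<^sub>v (P *\<^sub>v y))) $ i) \<longlonglongrightarrow> 0"
    proof (rule mult_mat_vec_tendsto_zero[of "P\<^sup>T" d N])
      show "M ^\<^sub>m k *\<^sub>v (P *\<^sub>v y) \<in> carrier_vec N" for k using M by (intro carrier_vecI) simp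
      show "(\<lambda>k. (M ^\<^sub>m k *\<^sub>v (P *\<^sub>v y)) $ j) \<longlonglongrightarrow> 0" if "j < N" for j
        using lim mult_mat_vec_mem_colspace[OF P y] that by blast
    qed (use P i in auto)
    then show "(\<lambda>k. (F ^\<^sub>m k *\<^sub>v y) $ i) \<longlonglongrightarrow> 0" unfolding pow[OF y] recover[OF Fk] .
  next
    fix x i assume lim: "\<forall>y \<in> carrier_vec d. \<forall>i < d. (\<lambda>k. (F ^\<^sub>m k *\<^sub>v y) $ i) \<longlonglongrightarrow> 0"
      and x: "x \<in> colspace P" and i: "i < N"
    obtain y where y: "y \<in> carrier_vec d" and xy: "x = P *\<^sub>v y"
      using x P unfolding colspace_def by auto
    show "(\<lambda>k. (M ^\<^sub>m k *\<^sub>v x) $ i) \<longlonglongrightarrow> 0"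
      unfolding xy pow[OF y]
      by (rule mult_mat_vec_tendsto_zero[OF P Fk]) (use lim y i in auto)
  qed
qed

lemma pow_smult_mat:
  fixes A :: "'a::comm_ring_1 mat"
  assumes A: "A \<in> carrier_mat n n"
  shows "(c \<cdot>\<^sub>m A) ^\<^sub>m k = c ^ k \<cdot>\<^sub>m A ^\<^sub>m k"
proof (induction k)
  case (Suc k)
  have "(c \<cdot>\<^sub>m A) ^\<^sub>m Suc k = (c ^ k \<cdot>\<^sub>m A ^\<^sub>m k) * (c \<cdot>\<^sub>m A)" using Suc by simp
  also have "\<dots> = c ^ Suc k \<cdot>\<^sub>m (A ^\<^sub>m k * A)" using A by (intro eq_matI) auto
  finally show ?case by simp
qed (use A in \<open>intro eq_matI, auto\<close>)

lemma eigenvalue_smult_mat: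
  fixes A :: "'a::comm_ring_1 mat"
  assumes A: "A \<in> carrier_mat n n" and ev: "eigenvalue A z"
  shows "eigenvalue (c \<cdot>\<^sub>m A) (c * z)"
proof -
  obtain v where v: "v \<in> carrier_vec n" "v \<noteq> 0\<^sub>v n" and Av: "A *\<^sub>v v = z \<cdot>\<^sub>v v"
    using ev A unfolding eigenvalue_def eigenvector_def by auto
  have "(c \<cdot>\<^sub>m A) *\<^sub>v v = (c * z) \<cdot>\<^sub>v v"
  proof (rule eq_vecI)
    fix i assume "i < dim_vec ((c * z) \<cdot>\<^sub>v v)"
    then have i: "i < n" using v by simp
    have "((c \<cdot>\<^sub>m A) *\<^sub>v v) $ i = c * (A *\<^sub>v v) $ i"
      using A v i by (simp add: scalar_prod_def sum_distrib_left mult.assoc)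
    then show "((c \<cdot>\<^sub>m A) *\<^sub>v v) $ i = ((c * z) \<cdot>\<^sub>v v) $ i" using Av i v by simp
  qed (use A v in simp)
  then show ?thesis using A v unfolding eigenvalue_def eigenvector_def by auto
qed

text \<open>Scaling \<open>G\<close> by \<open>1 / \<rho>\<close> for a \<open>\<rho>\<close> strictly between the spectral radius and \<open>1\<close>
  keeps the spectral radius below \<open>1\<close>, so the powers of the scaled matrix are bounded.\<close>

lemma spectral_radius_less_1_pow_mat_decay:
  fixes G :: "complex mat"
  assumes G: "G \<in> carrier_mat n n" and n: "0 < n" and sr: "spectral_radius G < 1"
  shows "\<exists>\<rho> c. 0 < \<rho> \<and> \<rho> < 1
    \<and> (\<forall>k i j. i < n \<longrightarrow> j < n \<longrightarrow> norm ((G ^\<^sub>m k) $$ (i, j)) \<le> c * \<rho> ^ k)"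
proof -
  have sr0: "0 \<le> spectral_radius G"
    using spectral_radius_mem_max(1)[OF G n] by auto
  define \<rho> where "\<rho> = (1 + spectral_radius G) / 2"
  have \<rho>: "0 < \<rho>" "\<rho> < 1" "spectral_radius G < \<rho>" using sr sr0 unfolding \<rho>_def by auto
  define G' where "G' = complex_of_real (1 / \<rho>) \<cdot>\<^sub>m G"
  have G': "G' \<in> carrier_mat n n" using G unfolding G'_def by simp
  have G_eq: "G = complex_of_real \<rho> \<cdot>\<^sub>m G'" unfolding G'_def using \<rho> G by (intro eq_matI) auto
  have "spectral_radius G' < 1"
  proof -
    obtain \<mu> where \<mu>: "eigenvalue G' \<mu>" "spectral_radius G' = norm \<mu>"
      using spectral_radius_mem_max(1)[OF G' n] unfolding spectrum_def by auto
    have "eigenvalue G (complex_of_real \<rho> * \<mu>)"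
      unfolding G_eq by (rule eigenvalue_smult_mat[OF G' \<mu>(1)])
    then have "norm (complex_of_real \<rho> * \<mu>) \<le> spectral_radius G"
      by (intro spectral_radius_mem_max(2)[OF G n]) (auto simp: spectrum_def)
    then have "\<rho> * norm \<mu> \<le> spectral_radius G" using \<rho>(1) by (simp add: norm_mult)
    then show ?thesis using \<mu>(2) \<rho> by (smt (verit) mult_le_cancel_left1)
  qed
  then obtain c where c: "\<And>k. norm_bound (G' ^\<^sub>m k) c"
    using spectral_radius_jnf_norm_bound_less_1_upper_triangular[OF G'] by blast
  have "norm ((G ^\<^sub>m k) $$ (i, j)) \<le> c * \<rho> ^ k" if ij: "i < n" "j < n" for k i j
  proof -
    have "norm ((G ^\<^sub>m k) $$ (i, j)) = \<rho> ^ k * norm ((G' ^\<^sub>m k) $$ (i, j))"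
      unfolding G_eq pow_smult_mat[OF G'] using G' ij \<rho>(1) by (simp add: norm_mult norm_power)
    also have "\<dots> \<le> \<rho> ^ k * c"
      using c[of k] G' ij \<rho>(1) unfolding norm_bound_def by (intro mult_left_mono) auto
    finally show ?thesis by (simp add: mult.commute)
  qed
  then show ?thesis using \<rho>(1,2) by blast
qed

lemma schur_pow_mult_vec_tendsto_zero:
  fixes F :: "real mat"
  assumes F: "F \<in> carrier_mat d d" and sch: "schur F"
    and x: "x \<in> carrier_vec d" and i: "i < d"
  shows "(\<lambda>k. (F ^\<^sub>m k *\<^sub>v x) $ i) \<longlonglongrightarrow> 0"
proof -
  define G where "G = map_mat complex_of_real F"
  have G: "G \<in> carrier_mat d d" using F unfolding G_def by simp
  have d: "0 < d" using i by simp
  have "spectral_radius G < 1"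
    using spectral_radius_mem_max(1)[OF G d] sch unfolding schur_def G_def spectrum_def by auto
  then obtain \<rho> c where \<rho>: "0 < \<rho>" "\<rho> < 1"
    and bound: "\<And>k i j. i < d \<Longrightarrow> j < d \<Longrightarrow> norm ((G ^\<^sub>m k) $$ (i, j)) \<le> c * \<rho> ^ k"
    using spectral_radius_less_1_pow_mat_decay[OF G d] by blast
  have entry: "(\<lambda>k. (F ^\<^sub>m k) $$ (i, j)) \<longlonglongrightarrow> 0" if j: "j < d" for j
  proof (rule tendsto_0_le[where K = c])
    have "norm ((F ^\<^sub>m k) $$ (i, j)) = norm ((G ^\<^sub>m k) $$ (i, j))" for k
      unfolding G_def of_real_hom.mat_hom_pow[OF F, symmetric] using F i j by simp
    then show "\<forall>\<^sub>F k in sequentially. norm ((F ^\<^sub>m k) $$ (i, j)) \<le> norm (\<rho> ^ k) * c"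
      using bound[OF i j] \<rho>(1) by (simp add: norm_power mult.commute)
    show "(\<lambda>k. \<rho> ^ k) \<longlonglongrightarrow> 0"
      using \<rho> by (intro LIMSEQ_power_zero) auto
  qed
  have sum: "(F ^\<^sub>m k *\<^sub>v x) $ i = (\<Sum>j<d. (F ^\<^sub>m k) $$ (i, j) * x $ j)" for k
    using F x i by (simp add: scalar_prod_def lessThan_atLeast0)
  show ?thesis
    unfolding sum by (rule tendsto_null_sum) (auto intro!: tendsto_mult_left_zero entry)
qed

lemma Re_Im_of_real_mat_mult_vec:
  fixes M :: "real mat" and w :: "complex vec"
  assumes M: "M \<in> carrier_mat nr nc" and w: "w \<in> carrier_vec nc" and i: "i < nr"
  shows "Re ((map_mat complex_of_real M *\<^sub>v w) $ i) = (M *\<^sub>v map_vec Re w) $ i"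
    and "Im ((map_mat complex_of_real M *\<^sub>v w) $ i) = (M *\<^sub>v map_vec Im w) $ i"
  using M w i by (auto simp: scalar_prod_def)

lemma pow_mult_vec_tendsto_zero_imp_schur:
  fixes F :: "real mat"
  assumes F: "F \<in> carrier_mat d d"
    and decay: "\<And>x i. x \<in> carrier_vec d \<Longrightarrow> i < d \<Longrightarrow> (\<lambda>k. (F ^\<^sub>m k *\<^sub>v x) $ i) \<longlonglongrightarrow> 0"
  shows "schur F"
  unfolding schur_def
proof (intro allI impI)
  fix z assume ev: "eigenvalue (map_mat complex_of_real F) z"
  define G where "G = map_mat complex_of_real F"
  have G: "G \<in> carrier_mat d d" using F unfolding G_def by simp
  obtain w where w: "eigenvector G w z" using ev unfolding G_def eigenvalue_def by blast
  then have wc: "w \<in> carrier_vec d" and "w \<noteq> 0\<^sub>v d" using G unfolding eigenvector_def by auto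
  then obtain i where i: "i < d" and wi: "w $ i \<noteq> 0" by (metis eq_vecI carrier_vecD index_zero_vec)
  have Gk: "G ^\<^sub>m k = map_mat complex_of_real (F ^\<^sub>m k)" for k
    unfolding G_def by (rule of_real_hom.mat_hom_pow[OF F, symmetric])
  have "(\<lambda>k. (G ^\<^sub>m k *\<^sub>v w) $ i) \<longlonglongrightarrow> 0"
    unfolding tendsto_complex_iff Gk
    using Re_Im_of_real_mat_mult_vec[OF pow_carrier_mat[OF F] wc i]
      decay[of "map_vec Re w" i] decay[of "map_vec Im w" i] wc i by simp
  then have "(\<lambda>k. norm (z ^ k * w $ i)) \<longlonglongrightarrow> 0"
    using eigenvector_pow[OF G w] wc i by (simp add: tendsto_norm_zero_iff)
  moreover have "norm (w $ i) \<le> norm (z ^ k * w $ i)" if "1 \<le> norm z" for k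
    using that by (simp add: norm_mult norm_power one_le_power mult_le_cancel_right1)
  ultimately show "cmod z < 1"
    using wi LIMSEQ_le_const[of "\<lambda>k. norm (z ^ k * w $ i)" 0 "norm (w $ i)"] by force
qed

lemma schur_iff_pow_mult_vec_tendsto_zero:
  fixes F :: "real mat"
  assumes F: "F \<in> carrier_mat d d"
  shows "schur F \<longleftrightarrow> (\<forall>x \<in> carrier_vec d. \<forall>i < d. (\<lambda>k. (F ^\<^sub>m k *\<^sub>v x) $ i) \<longlonglongrightarrow> 0)"
  using schur_pow_mult_vec_tendsto_zero[OF F] pow_mult_vec_tendsto_zero_imp_schur[OF F] by blast

lemma linear_recurrence_pow_mat:
  fixes v :: "nat \<Rightarrow> real vec"
  assumes M: "M \<in> carrier_mat N N" and vL: "v L \<in> carrier_vec N"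
    and step: "\<forall>t \<ge> L. v (Suc t) = M *\<^sub>v v t"
  shows "v (k + L) = M ^\<^sub>m k *\<^sub>v v L"
proof (induction k)
  case (Suc k)
  have "v (Suc k + L) = M *\<^sub>v (M ^\<^sub>m k *\<^sub>v v L)" using step Suc.IH by simp
  also have "\<dots> = M ^\<^sub>m Suc k *\<^sub>v v L"
    using pow_mat_Suc_left[OF M] assoc_mult_mat_vec[OF M pow_carrier_mat[OF M] vL] by simp
  finally show ?case .
qed (use vL M in simp)

lemma trajectories_tendsto_zero_iff:
  fixes M :: "real mat" and S :: "real vec set"
  assumes M: "M \<in> carrier_mat N N" and S: "S \<subseteq> carrier_vec N"
  shows "(\<forall>v :: nat \<Rightarrow> real vec. v L \<in> S \<and> (\<forall>t \<ge> L. v (Suc t) = M *\<^sub>v v t)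
            \<longrightarrow> (\<forall>i < N. (\<lambda>t. v t $ i) \<longlonglongrightarrow> 0))
    \<longleftrightarrow> (\<forall>x \<in> S. \<forall>i < N. (\<lambda>k. (M ^\<^sub>m k *\<^sub>v x) $ i) \<longlonglongrightarrow> 0)"
proof (intro iffI ballI allI impI)
  fix x i
  assume H: "\<forall>v :: nat \<Rightarrow> real vec. v L \<in> S \<and> (\<forall>t \<ge> L. v (Suc t) = M *\<^sub>v v t)
          \<longrightarrow> (\<forall>i < N. (\<lambda>t. v t $ i) \<longlonglongrightarrow> 0)"
    and x: "x \<in> S" and i: "i < N"
  define v where "v t = M ^\<^sub>m (t - L) *\<^sub>v x" for t
  have xc: "x \<in> carrier_vec N" using x S by blast
  have "v L = x" unfolding v_def using xc M by simp
  moreover have "\<forall>t \<ge> L. v (Suc t) = M *\<^sub>v v t"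
  proof (intro allI impI)
    fix t assume "L \<le> t"
    then have "v (Suc t) = M ^\<^sub>m Suc (t - L) *\<^sub>v x" unfolding v_def by (simp add: Suc_diff_le)
    also have "\<dots> = M *\<^sub>v v t"
      unfolding v_def using pow_mat_Suc_left[OF M] assoc_mult_mat_vec[OF M pow_carrier_mat[OF M] xc] by simp
    finally show "v (Suc t) = M *\<^sub>v v t" .
  qed
  ultimately have "(\<lambda>t. v t $ i) \<longlonglongrightarrow> 0" using H x i by blast
  then have "(\<lambda>k. v (k + L) $ i) \<longlonglongrightarrow> 0" by (rule LIMSEQ_ignore_initial_segment)
  then show "(\<lambda>k. (M ^\<^sub>m k *\<^sub>v x) $ i) \<longlonglongrightarrow> 0" unfolding v_def by simp
next
  fix v :: "nat \<Rightarrow> real vec" and i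
  assume H: "\<forall>x \<in> S. \<forall>i < N. (\<lambda>k. (M ^\<^sub>m k *\<^sub>v x) $ i) \<longlonglongrightarrow> 0"
    and v: "v L \<in> S \<and> (\<forall>t \<ge> L. v (Suc t) = M *\<^sub>v v t)" and i: "i < N"
  have "v L \<in> carrier_vec N" using v S by blast
  then have "(\<lambda>k. v (k + L) $ i) \<longlonglongrightarrow> 0"
    using linear_recurrence_pow_mat[OF M _ conjunct2[OF v]] H v i by simp
  then show "(\<lambda>t. v t $ i) \<longlonglongrightarrow> 0" by (rule LIMSEQ_offset)
qed

lemma Theta_mat_carrier:
  assumes A: "A \<in> carrier_mat n n" and B: "B \<in> carrier_mat n m" and C: "C \<in> carrier_mat r n"
    and rank: "mrank (obs_mat L A C) = n"
  shows "Theta_mat L A B C \<in> carrier_mat (L * (m + r)) (L * (m + r))"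
proof -
  have O: "obs_mat L A C \<in> carrier_mat (L * r) n" using A C unfolding obs_mat_def by auto
  have "pinv (obs_mat L A C) \<in> carrier_mat n (L * r)"
    by (rule pinv_carrier_mat[OF O]) (use rank O in \<open>simp add: mrank_def\<close>)
  then have "Gamma_mat L A B C \<in> carrier_mat n (L * m + L * r)"
    unfolding Gamma_mat_def using A B C by (intro hcat_carrier) (auto simp: toep_mat_def reach_mat_def)
  then show ?thesis
    unfolding Theta_mat_def using B C by (auto simp: E_mat_def algebra_simps)
qed

theorem lemma4:
  fixes n m r L :: nat and A B C K P Phi :: "real mat"
  assumes "A \<in> carrier_mat n n" and "B \<in> carrier_mat n m" and "C \<in> carrier_mat r n"
    and "minimal A B C" and "schur A"
    and "mrank (obs_mat L A C) = n"
    and "K \<in> carrier_mat m (L * (m + r))"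
    and "P \<in> carrier_mat (L * (m + r)) (L * m + n)"
    and "colspace P = Pspace L A B C" and "P\<^sup>T * P = 1\<^sub>m (L * m + n)"
    and "Phi \<in> carrier_mat (L * (m + r)) (L * (m + r))" and "psd Phi"
    and "colspace Phi = Pspace L A B C"
  shows "(\<forall>v :: nat \<Rightarrow> real vec.
            v L \<in> gaussian_realizations Phi
            \<and> (\<forall>t \<ge> L. v (Suc t) = (Theta_mat L A B C + Pi_mat L m r * K) *\<^sub>v v t)
            \<longrightarrow> (\<forall>i < L * (m + r). (\<lambda>t. v t $ i) \<longlonglongrightarrow> 0))
         \<longleftrightarrow> schur (P\<^sup>T * (Theta_mat L A B C + Pi_mat L m r * K) * P)"
proof -
  define M where "M = Theta_mat L A B C + Pi_mat L m r * K"
  have Theta: "Theta_mat L A B C \<in> carrier_mat (L * (m + r)) (L * (m + r))"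
    by (rule Theta_mat_carrier[OF assms(1-3,6)])
  have Pi: "Pi_mat L m r \<in> carrier_mat (L * (m + r)) m" by (simp add: Pi_mat_def)
  have M: "M \<in> carrier_mat (L * (m + r)) (L * (m + r))" using Theta Pi assms(7) unfolding M_def by simp
  have "colspace P = colspace (ctrb_mat (Theta_mat L A B C) (Pi_mat L m r))"
    using assms(2,3,9) unfolding Pspace_def by simp
  then have inv: "\<And>w. w \<in> colspace P \<Longrightarrow> M *\<^sub>v w \<in> colspace P"
    unfolding M_def using colspace_ctrb_mat_closed_loop_invariant[OF Theta Pi assms(7)] by simp
  have PMP: "P\<^sup>T * M * P \<in> carrier_mat (L * m + n) (L * m + n)" using M assms(8) by simp
  have realizations: "gaussian_realizations Phi = colspace P"
    unfolding gaussian_realizations_def using assms(9,13) by simp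
  note trajectories_tendsto_zero_iff[OF M colspace_carrier[OF assms(8)], of L]
  also note invariant_colspace_pow_tendsto_zero_iff[OF M assms(8,10) inv]
  also note schur_iff_pow_mult_vec_tendsto_zero[OF PMP, symmetric]
  finally show ?thesis unfolding realizations M_def .
qed

end
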